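(* Let $A,B$ be abstract state spaces and let $\omega\in A\otimes_{\max}B$ be a state that is steering for its $B$-marginal $\omega^B$. Then $\hat\omega(A^*_+)=\mathrm{Face}(\omega^B)$, the smallest face of $B_+$ containing $\omega^B$.
   Context: An abstract state space is a pair $(A,u_A)$ where $A$ is a finite-dimensional real vector space with a closed, pointed, generating convex cone $A_+$, and $u_A$ is an interior point of the dual cone $A^*_+$. An effect on $A$ is $a\in A^*_+$ with $a\le u_A$; an observable on $A$ is a finite family of effects $\{a_i\}$ with $\sum_i a_i=u_A$. $A\otimes_{\max}B$ is the space of bilinear forms on $A^*\times B^*$ nonnegative on $A^*_+\times B^*_+$; a state is such a form with $\omega(u_A,u_B)=1$; $\hat\omega:A^*\to B$ is $\hat\omega(a)(b)=\omega(a,b)$ and $\omega^B=\hat\omega(u_A)$. An ensemble for $\beta\in B_+$ is a finite family $\beta_i\in B_+$ with $\sum_i\beta_i=\beta$. $\omega$ is steering for its $B$-marginal if for every ensemble $\{\beta_i\}$ for $\omega^B$ there is an observable $\{x_i\}$ on $A$ with $\hat\omega(x_i)=\beta_i$ for all $i$. A face of $B_+$ is a subcone $F_+$ such that $x,y\in B_+$, $x+y\in F_+$ imply $x,y\in F_+$. *)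

theory Defs
  imports "HOL-Analysis.Analysis"
begin

text \<open>A finite-dimensional real vector space is modelled as a Euclidean space type;
its dual space is identified with the space itself via the inner product
(a functional a acts on x by a \<bullet> x).\<close>

definition dual_cone :: "'a::euclidean_space set \<Rightarrow> 'a set" where
  "dual_cone K = {a. \<forall>x\<in>K. 0 \<le> a \<bullet> x}"

definition pointed_cone :: "'a::real_vector set \<Rightarrow> bool" where
  "pointed_cone K \<longleftrightarrow> K \<inter> uminus ` K = {0}"

definition generating_cone :: "'a::real_vector set \<Rightarrow> bool" where
  "generating_cone K \<longleftrightarrow> {x - y | x y. x \<in> K \<and> y \<in> K} = UNIV"

definition abstract_state_space :: "'a::euclidean_space set \<Rightarrow> 'a \<Rightarrow> bool" where
  "abstract_state_space K u \<longleftrightarrow>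
     closed K \<and> convex_cone K \<and> pointed_cone K \<and> generating_cone K \<and>
     u \<in> interior (dual_cone K)"

definition effect :: "'a::euclidean_space set \<Rightarrow> 'a \<Rightarrow> 'a \<Rightarrow> bool" where
  "effect K u a \<longleftrightarrow> a \<in> dual_cone K \<and> u - a \<in> dual_cone K"

definition observable :: "'a::euclidean_space set \<Rightarrow> 'a \<Rightarrow> nat set \<Rightarrow> (nat \<Rightarrow> 'a) \<Rightarrow> bool" where
  "observable K u I x \<longleftrightarrow> finite I \<and> (\<forall>i\<in>I. effect K u (x i)) \<and> (\<Sum>i\<in>I. x i) = u"

text \<open>Elements of A \<otimes>_max B: bilinear forms on A* \<times> B* nonnegative on A*_+ \<times> B*_+.\<close>
definition max_tensor :: "'a::euclidean_space set \<Rightarrow> 'b::euclidean_space set \<Rightarrow>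
    ('a \<Rightarrow> 'b \<Rightarrow> real) \<Rightarrow> bool" where
  "max_tensor KA KB \<omega> \<longleftrightarrow> bilinear \<omega> \<and>
     (\<forall>a\<in>dual_cone KA. \<forall>b\<in>dual_cone KB. 0 \<le> \<omega> a b)"

definition state_max :: "'a::euclidean_space set \<Rightarrow> 'a \<Rightarrow> 'b::euclidean_space set \<Rightarrow> 'b \<Rightarrow>
    ('a \<Rightarrow> 'b \<Rightarrow> real) \<Rightarrow> bool" where
  "state_max KA uA KB uB \<omega> \<longleftrightarrow> max_tensor KA KB \<omega> \<and> \<omega> uA uB = 1"

text \<open>\<omega>-hat: A* \<rightarrow> B (= B**), the vector representing b \<mapsto> \<omega> a b.\<close>
definition omega_hat :: "('a \<Rightarrow> 'b::euclidean_space \<Rightarrow> real) \<Rightarrow> 'a \<Rightarrow> 'b" where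
  "omega_hat \<omega> a = (\<Sum>b\<in>Basis. \<omega> a b *\<^sub>R b)"

definition ensemble :: "'b::euclidean_space set \<Rightarrow> 'b \<Rightarrow> nat set \<Rightarrow> (nat \<Rightarrow> 'b) \<Rightarrow> bool" where
  "ensemble KB \<beta> I \<beta>s \<longleftrightarrow> finite I \<and> (\<forall>i\<in>I. \<beta>s i \<in> KB) \<and> (\<Sum>i\<in>I. \<beta>s i) = \<beta>"

definition steering :: "'a::euclidean_space set \<Rightarrow> 'a \<Rightarrow> 'b::euclidean_space set \<Rightarrow>
    ('a \<Rightarrow> 'b \<Rightarrow> real) \<Rightarrow> bool" where
  "steering KA uA KB \<omega> \<longleftrightarrow>
     (\<forall>I \<beta>s. ensemble KB (omega_hat \<omega> uA) I \<beta>s \<longrightarrow>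
        (\<exists>x. observable KA uA I x \<and> (\<forall>i\<in>I. omega_hat \<omega> (x i) = \<beta>s i)))"

definition cone_face :: "'b::real_vector set \<Rightarrow> 'b set \<Rightarrow> bool" where
  "cone_face K F \<longleftrightarrow> convex_cone F \<and> F \<subseteq> K \<and>
     (\<forall>x\<in>K. \<forall>y\<in>K. x + y \<in> F \<longrightarrow> x \<in> F \<and> y \<in> F)"

definition Face :: "'b::real_vector set \<Rightarrow> 'b \<Rightarrow> 'b set" where
  "Face K \<beta> = \<Inter>{F. cone_face K F \<and> \<beta> \<in> F}"

end

theory Submission imports Defs begin

text \<open>Every a \<in> A*_+ is dominated by a multiple of the interior point u_A, so
\<open>\<hat>\<omega>(a)\<close> is a positive summand of a multiple of \<open>\<omega>\<^sup>B = \<hat>\<omega>(u_A)\<close> and lies in every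
face containing \<open>\<omega>\<^sup>B\<close>. Conversely, \<open>\<hat>\<omega>(A*_+)\<close> is itself a face: if x, y \<in> B_+ and
x + y = \<open>\<hat>\<omega>(a)\<close>, then t x and t y + \<open>\<hat>\<omega>(u_A - t a)\<close> form an ensemble for \<open>\<omega>\<^sup>B\<close>,
and steering supplies an effect e with \<open>\<hat>\<omega>(e) = t x\<close>.\<close>

lemma dual_cone_dual_cone_subset:
  fixes K :: "'a::euclidean_space set"
  assumes "closed K" "convex_cone K"
  shows "dual_cone (dual_cone K) \<subseteq> K"
proof
  fix z assume z: "z \<in> dual_cone (dual_cone K)"
  show "z \<in> K"
  proof (rule ccontr)
    assume "z \<notin> K"
    moreover have "convex K" using assms(2) by (simp add: convex_cone_def)
    ultimately obtain a b where ab: "a \<bullet> z < b" "\<forall>x\<in>K. b < a \<bullet> x"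
      using separating_hyperplane_closed_point assms(1) by blast
    have b: "b < 0" using ab(2) convex_cone_contains_0[OF assms(2)] by force
    have "a \<in> dual_cone K"
      unfolding dual_cone_def
    proof (clarify, rule ccontr)
      fix x assume x: "x \<in> K" "\<not> 0 \<le> a \<bullet> x"
      \<comment> \<open>a scaled copy of x would lie on the separating hyperplane\<close>
      have "(b / (a \<bullet> x)) *\<^sub>R x \<in> K"
        using x b by (intro convex_cone_scaleR[OF assms(2)]) (simp_all add: divide_nonpos_neg)
      moreover have "a \<bullet> ((b / (a \<bullet> x)) *\<^sub>R x) = b" using x(2) by simp
      ultimately show False using ab(2) by force
    qed
    then show False using z ab(1) b unfolding dual_cone_def by (force simp: inner_commute)
  qed
qed

lemma convex_cone_dual_cone: "convex_cone (dual_cone K)"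
  by (simp add: convex_cone_iff dual_cone_def inner_add_left)

lemma interior_minus_scaleR:
  fixes u :: "'a::real_normed_vector"
  assumes "u \<in> interior S"
  shows "\<exists>t>0. u - t *\<^sub>R a \<in> S"
proof (cases "a = 0")
  case True
  then show ?thesis using assms interior_subset by (auto intro: exI[of _ 1])
next
  case False
  obtain e where e: "e > 0" "ball u e \<subseteq> S" using assms by (meson mem_interior)
  define t where "t = e / (2 * norm a)"
  have "t > 0" using e False by (simp add: t_def)
  moreover have "norm (t *\<^sub>R a) = e / 2" using False e by (simp add: t_def)
  then have "u - t *\<^sub>R a \<in> ball u e" using e by (simp add: dist_norm)
  ultimately show ?thesis using e by blast
qed

lemma cone_face_scaled_summand:
  assumes "convex_cone K" "cone_face K F" "x \<in> K" "y \<in> K" "t > 0" "t *\<^sub>R x + y \<in> F"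
  shows "x \<in> F"
proof -
  have "convex_cone F" using assms(2) by (simp add: cone_face_def)
  have "t *\<^sub>R x \<in> F"
    using assms convex_cone_scaleR unfolding cone_face_def by (meson less_imp_le)
  moreover have "x = inverse t *\<^sub>R (t *\<^sub>R x)" using assms(5) by simp
  ultimately show ?thesis
    using assms(5) convex_cone_scaleR[OF \<open>convex_cone F\<close>, of "inverse t" "t *\<^sub>R x"] by simp
qed

lemma Face_eqI:
  assumes "cone_face K F" "\<beta> \<in> F" "\<And>G. cone_face K G \<Longrightarrow> \<beta> \<in> G \<Longrightarrow> F \<subseteq> G"
  shows "Face K \<beta> = F"
  unfolding Face_def using assms by blast

lemma inner_omega_hat:
  fixes b :: "'b::euclidean_space"
  assumes "bilinear \<omega>"
  shows "b \<bullet> omega_hat \<omega> a = \<omega> a b"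
proof -
  have lin: "linear (\<omega> a)" using assms by (simp add: bilinear_def)
  have "b \<bullet> omega_hat \<omega> a = (\<Sum>i\<in>Basis. \<omega> a ((b \<bullet> i) *\<^sub>R i))"
    using lin by (simp add: omega_hat_def inner_sum_right linear_scale mult.commute)
  also have "\<dots> = \<omega> a (\<Sum>i\<in>Basis. (b \<bullet> i) *\<^sub>R i)"
    using lin by (simp add: linear_sum)
  also have "\<dots> = \<omega> a b" by (simp add: euclidean_representation)
  finally show ?thesis .
qed

lemma linear_omega_hat:
  assumes "bilinear \<omega>"
  shows "linear (omega_hat \<omega>)"
proof (rule linearI)
  show "omega_hat \<omega> (x + y) = omega_hat \<omega> x + omega_hat \<omega> y" for x y
    using assms by (simp add: omega_hat_def bilinear_ladd scaleR_add_left sum.distrib)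
  show "omega_hat \<omega> (c *\<^sub>R x) = c *\<^sub>R omega_hat \<omega> x" for c x
    using assms by (simp add: omega_hat_def bilinear_lmul scaleR_sum_right)
qed

lemma omega_hat_mem_cone:
  assumes "max_tensor KA KB \<omega>" "closed KB" "convex_cone KB" "a \<in> dual_cone KA"
  shows "omega_hat \<omega> a \<in> KB"
proof -
  have "omega_hat \<omega> a \<in> dual_cone (dual_cone KB)"
    using assms(1,4) by (simp add: dual_cone_def max_tensor_def inner_omega_hat inner_commute)
  then show ?thesis using dual_cone_dual_cone_subset[OF assms(2,3)] by blast
qed

lemma omega_hat_split_unit:
  assumes "max_tensor KA KB \<omega>" "uA \<in> interior (dual_cone KA)"
  obtains t where "t > 0" "uA - t *\<^sub>R a \<in> dual_cone KA"
    "omega_hat \<omega> uA = t *\<^sub>R omega_hat \<omega> a + omega_hat \<omega> (uA - t *\<^sub>R a)"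
proof -
  have lin: "linear (omega_hat \<omega>)"
    using assms(1) by (simp add: max_tensor_def linear_omega_hat)
  obtain t where "t > 0" "uA - t *\<^sub>R a \<in> dual_cone KA"
    using interior_minus_scaleR[OF assms(2)] by blast
  moreover have "omega_hat \<omega> uA = t *\<^sub>R omega_hat \<omega> a + omega_hat \<omega> (uA - t *\<^sub>R a)"
    by (simp add: linear_diff[OF lin] linear_scale[OF lin])
  ultimately show ?thesis using that by blast
qed

lemma omega_hat_image_subset_face:
  assumes "max_tensor KA KB \<omega>" "closed KB" "convex_cone KB"
    "uA \<in> interior (dual_cone KA)" "cone_face KB F" "omega_hat \<omega> uA \<in> F"
  shows "omega_hat \<omega> ` dual_cone KA \<subseteq> F"
proof clarify
  fix a assume a: "a \<in> dual_cone KA"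
  obtain t where "t > 0" "uA - t *\<^sub>R a \<in> dual_cone KA"
    "omega_hat \<omega> uA = t *\<^sub>R omega_hat \<omega> a + omega_hat \<omega> (uA - t *\<^sub>R a)"
    using omega_hat_split_unit[OF assms(1,4)] .
  then show "omega_hat \<omega> a \<in> F"
    using a assms by (metis cone_face_scaled_summand omega_hat_mem_cone)
qed

lemma steering_lifts_summand:
  assumes "max_tensor KA KB \<omega>" "closed KB" "convex_cone KB"
    "uA \<in> interior (dual_cone KA)" "steering KA uA KB \<omega>"
    "x \<in> KB" "y \<in> KB" "x + y \<in> omega_hat \<omega> ` dual_cone KA"
  shows "x \<in> omega_hat \<omega> ` dual_cone KA"
proof -
  have lin: "linear (omega_hat \<omega>)"
    using assms(1) by (simp add: max_tensor_def linear_omega_hat)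
  obtain a where a: "a \<in> dual_cone KA" "x + y = omega_hat \<omega> a" using assms(8) by blast
  obtain t where t: "t > 0" "uA - t *\<^sub>R a \<in> dual_cone KA"
    "omega_hat \<omega> uA = t *\<^sub>R (x + y) + omega_hat \<omega> (uA - t *\<^sub>R a)"
    using omega_hat_split_unit[OF assms(1,4)] a(2) by metis
  define \<beta>s where "\<beta>s i = (if i = 0 then t *\<^sub>R x else t *\<^sub>R y + omega_hat \<omega> (uA - t *\<^sub>R a))"
    for i :: nat
  have "ensemble KB (omega_hat \<omega> uA) {0, 1} \<beta>s"
    using t assms(2,3,6,7) omega_hat_mem_cone[OF assms(1-3) t(2)]
    by (auto simp: ensemble_def \<beta>s_def scaleR_add_right convex_cone_add convex_cone_scaleR)
  then obtain e where e: "observable KA uA {0, 1} e" "omega_hat \<omega> (e 0) = t *\<^sub>R x"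
    using assms(5) unfolding steering_def by (force simp: \<beta>s_def)
  have "inverse t *\<^sub>R e 0 \<in> dual_cone KA"
    using e(1) t(1)
    by (intro convex_cone_scaleR[OF convex_cone_dual_cone]) (simp_all add: observable_def effect_def)
  moreover have "omega_hat \<omega> (inverse t *\<^sub>R e 0) = x"
    using e(2) t(1) by (simp add: linear_scale[OF lin])
  ultimately show ?thesis by (metis image_eqI)
qed

lemma omega_hat_image_cone_face:
  assumes "max_tensor KA KB \<omega>" "closed KB" "convex_cone KB"
    "uA \<in> interior (dual_cone KA)" "steering KA uA KB \<omega>"
  shows "cone_face KB (omega_hat \<omega> ` dual_cone KA)"
  unfolding cone_face_def
proof (intro conjI ballI impI)
  show "convex_cone (omega_hat \<omega> ` dual_cone KA)"
    using assms(1) convex_cone_dual_cone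
    by (intro convex_cone_linear_image) (simp add: max_tensor_def linear_omega_hat)
  show "omega_hat \<omega> ` dual_cone KA \<subseteq> KB"
    using omega_hat_mem_cone[OF assms(1-3)] by blast
  fix x y assume xy: "x \<in> KB" "y \<in> KB" "x + y \<in> omega_hat \<omega> ` dual_cone KA"
  then show "x \<in> omega_hat \<omega> ` dual_cone KA"
    using steering_lifts_summand[OF assms] by blast
  from xy show "y \<in> omega_hat \<omega> ` dual_cone KA"
    using steering_lifts_summand[OF assms, of y x] by (simp add: add.commute)
qed

theorem lemma5p2:
  fixes KA :: "'a::euclidean_space set" and uA :: 'a
    and KB :: "'b::euclidean_space set" and uB :: 'b
    and \<omega> :: "'a \<Rightarrow> 'b \<Rightarrow> real"
  assumes "abstract_state_space KA uA"
    and "abstract_state_space KB uB"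
    and "state_max KA uA KB uB \<omega>"
    and "steering KA uA KB \<omega>"
  shows "omega_hat \<omega> ` dual_cone KA = Face KB (omega_hat \<omega> uA)"
proof -
  have \<omega>: "max_tensor KA KB \<omega>" using assms(3) by (simp add: state_max_def)
  have KB: "closed KB" "convex_cone KB" using assms(2) by (simp_all add: abstract_state_space_def)
  have uA: "uA \<in> interior (dual_cone KA)" using assms(1) by (simp add: abstract_state_space_def)
  show ?thesis
  proof (rule Face_eqI[symmetric])
    show "cone_face KB (omega_hat \<omega> ` dual_cone KA)"
      using omega_hat_image_cone_face[OF \<omega> KB uA assms(4)] .
    show "omega_hat \<omega> uA \<in> omega_hat \<omega> ` dual_cone KA"
      using uA interior_subset by blast
    show "omega_hat \<omega> ` dual_cone KA \<subseteq> G"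
      if "cone_face KB G" "omega_hat \<omega> uA \<in> G" for G
      using omega_hat_image_subset_face[OF \<omega> KB uA that] .
  qed
qed

end
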